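(* Let $\mathcal H_1,\mathcal H_2$ be real Hilbert spaces, $\chi\in]0,+\infty[$, $\boldsymbol f\in\Gamma_0(\mathcal H_1\oplus\mathcal H_2)$, and let $\boldsymbol{\mathcal L}:\mathcal H_1\oplus\mathcal H_2\to\mathbb R$ be differentiable with $\chi$-Lipschitzian gradient, such that $\boldsymbol{\mathcal L}(x_1,\cdot)$ is concave for every $x_1\in\mathcal H_1$ and $\boldsymbol{\mathcal L}(\cdot,x_2)$ is convex for every $x_2\in\mathcal H_2$. Suppose there exists $(z_1,z_2)$ with $\big(-\nabla_1\boldsymbol{\mathcal L}(z_1,z_2),\nabla_2\boldsymbol{\mathcal L}(z_1,z_2)\big)\in\partial\boldsymbol f(z_1,z_2)$. Let $\varepsilon\in]0,1/(\chi+1)[$, let $(\gamma_n)_{n\in\mathbb N}$ be a sequence in $[\varepsilon,(1-\varepsilon)/\chi]$, let $(x_{1,0},x_{2,0})\in\mathcal H_1\oplus\mathcal H_2$, and for $i\in\{1,2\}$ let $(a_{i,n})_n,(b_{i,n})_n,(c_{i,n})_n$ be absolutely summable sequences in $\mathcal H_i$. For every $n$ define $y_{1,n}=x_{1,n}-\gamma_n(\nabla_1\boldsymbol{\mathcal L}(x_{1,n},x_{2,n})+a_{1,n})$, $y_{2,n}=x_{2,n}+\gamma_n(\nabla_2\boldsymbol{\mathcal L}(x_{1,n},x_{2,n})+a_{2,n})$, $(p_{1,n},p_{2,n})=\operatorname{prox}_{\gamma_n\boldsymbol f}(y_{1,n},y_{2,n})+(b_{1,n},b_{2,n})$, $q_{1,n}=p_{1,n}-\gamma_n(\nabla_1\boldsymbol{\mathcal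 L}(p_{1,n},p_{2,n})+c_{1,n})$, $q_{2,n}=p_{2,n}+\gamma_n(\nabla_2\boldsymbol{\mathcal L}(p_{1,n},p_{2,n})+c_{2,n})$, $x_{1,n+1}=x_{1,n}-y_{1,n}+q_{1,n}$, $x_{2,n+1}=x_{2,n}-y_{2,n}+q_{2,n}$. Then there exist $(\overline x_1,\overline x_2)$ with $\overline x_1\in\operatorname{Argmin}_{x\in\mathcal H_1}\big(\boldsymbol f(x,\overline x_2)+\boldsymbol{\mathcal L}(x,\overline x_2)\big)$ and $\overline x_2\in\operatorname{Argmin}_{x\in\mathcal H_2}\big(\boldsymbol f(\overline x_1,x)-\boldsymbol{\mathcal L}(\overline x_1,x)\big)$, such that $x_{1,n}\rightharpoonup\overline x_1$, $p_{1,n}\rightharpoonup\overline x_1$, $x_{2,n}\rightharpoonup\overline x_2$, $p_{2,n}\rightharpoonup\overline x_2$.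
   Context: $\Gamma_0(\mathcal K)$ denotes the proper lower semicontinuous convex functions $\mathcal K\to\left]-\infty,+\infty\right]$; $\partial$ denotes the subdifferential; $\mathcal H_1\oplus\mathcal H_2$ is the product Hilbert space with inner product $\langle x_1,y_1\rangle+\langle x_2,y_2\rangle$. $\nabla_i\boldsymbol{\mathcal L}(x_1,x_2)$ is the partial gradient with respect to the $i$-th variable. For $\varphi\in\Gamma_0(\mathcal K)$, $\operatorname{prox}_\varphi x=\operatorname{argmin}_y\big(\varphi(y)+\tfrac12\|x-y\|^2\big)$. $\rightharpoonup$ denotes weak convergence. *)

theory Defs
  imports "HOL-Analysis.Analysis"
begin

definition proper_fun :: "('a \<Rightarrow> ereal) \<Rightarrow> bool" where
  "proper_fun f \<longleftrightarrow> (\<forall>x. f x \<noteq> -\<infinity>) \<and> (\<exists>x. f x \<noteq> \<infinity>)"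

definition ereal_convex :: "('a::real_vector \<Rightarrow> ereal) \<Rightarrow> bool" where
  "ereal_convex f \<longleftrightarrow> (\<forall>x y t. 0 < t \<and> t < 1 \<longrightarrow>
      f ((1 - t) *\<^sub>R x + t *\<^sub>R y) \<le> ereal (1 - t) * f x + ereal t * f y)"

definition lsc :: "('a::topological_space \<Rightarrow> ereal) \<Rightarrow> bool" where
  "lsc f \<longleftrightarrow> (\<forall>c. closed {x. f x \<le> c})"

definition Gamma0 :: "('a::real_normed_vector \<Rightarrow> ereal) \<Rightarrow> bool" where
  "Gamma0 f \<longleftrightarrow> proper_fun f \<and> ereal_convex f \<and> lsc f"

definition subdiff :: "('a::real_inner \<Rightarrow> ereal) \<Rightarrow> 'a \<Rightarrow> 'a set" where
  "subdiff f x = {u. \<forall>y. f x + ereal (inner (y - x) u) \<le> f y}"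

definition prox :: "('a::real_inner \<Rightarrow> ereal) \<Rightarrow> 'a \<Rightarrow> 'a" where
  "prox \<phi> x = (THE p. \<forall>y. \<phi> p + ereal ((norm (x - p))\<^sup>2 / 2) \<le> \<phi> y + ereal ((norm (x - y))\<^sup>2 / 2))"

definition Argmin :: "('a \<Rightarrow> 'b::order) \<Rightarrow> 'a set" where
  "Argmin g = {x. \<forall>y. g x \<le> g y}"

definition weak_conv :: "(nat \<Rightarrow> 'a::real_inner) \<Rightarrow> 'a \<Rightarrow> bool" where
  "weak_conv X x \<longleftrightarrow> (\<forall>y. (\<lambda>n. inner (X n) y) \<longlonglongrightarrow> inner x y)"

end

(*
  With B = (grad_1 L, -grad_2 L), which is monotone because L is convex-concave and
  Lipschitz because grad L is, the iteration is Tseng's forward-backward-forward method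
  with summable errors for the inclusion 0 in (subdiff f + B)(z), whose solutions are
  exactly the saddle points in the conclusion. An exact Tseng step decreases the squared
  distance to every solution by a fixed multiple of the squared residual
  |z - prox(z - gamma B z)|^2, so the perturbed sequence is quasi-Fejer: its distances
  to solutions converge and the residuals tend to zero. By monotonicity, weak cluster
  points are then solutions, and Opial's argument (weak sequential compactness of bounded
  sets, via a diagonal subsequence and the Riesz representation) yields weak convergence
  of x_n, and hence of p_n.
*)

theory Submission
  imports Defs "HOL-Library.Diagonal_Subsequence"
begin

lemma norm_diff_midpoint_sq:
  fixes y a b :: "'h::real_inner"
  shows "(norm (y - ((1/2) *\<^sub>R a + (1/2) *\<^sub>R b)))\<^sup>2
       = (norm (y - a))\<^sup>2 / 2 + (norm (y - b))\<^sup>2 / 2 - (norm (a - b))\<^sup>2 / 4"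
  unfolding power2_norm_eq_inner
  by (simp add: inner_diff_left inner_diff_right inner_add_left inner_add_right
      inner_commute algebra_simps) (simp add: field_simps)

lemma norm_diff_segment_sq:
  fixes y p x :: "'h::real_inner"
  shows "(norm (y - ((1 - t) *\<^sub>R p + t *\<^sub>R x)))\<^sup>2
       = (norm (y - p))\<^sup>2 - 2 * t * inner (x - p) (y - p) + t\<^sup>2 * (norm (x - p))\<^sup>2"
  unfolding power2_norm_eq_inner
  by (simp add: inner_diff_left inner_diff_right inner_add_left
      inner_add_right inner_commute algebra_simps power2_eq_square)

lemma Cauchy_if_sq_dist_le:
  fixes X :: "nat \<Rightarrow> 'h::real_normed_vector"
  assumes le: "\<And>j k. (norm (X j - X k))\<^sup>2 \<le> d j + d k" and d: "d \<longlonglongrightarrow> 0"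
  shows "Cauchy X"
  unfolding Cauchy_def
proof (intro allI impI)
  fix e :: real
  assume "0 < e"
  then obtain N where N: "\<And>n. N \<le> n \<Longrightarrow> \<bar>d n\<bar> < e\<^sup>2 / 2"
    using d unfolding LIMSEQ_def dist_real_def by (metis diff_zero half_gt_zero zero_less_power)
  have "dist (X j) (X k) < e" if "N \<le> j" "N \<le> k" for j k
  proof -
    have "(norm (X j - X k))\<^sup>2 < e\<^sup>2"
      using le[of j k] N[OF that(1)] N[OF that(2)] by linarith
    then show ?thesis
      using \<open>0 < e\<close> by (simp add: dist_norm power_less_imp_less_base)
  qed
  then show "\<exists>M. \<forall>j\<ge>M. \<forall>k\<ge>M. dist (X j) (X k) < e"
    by blast
qed

text \<open>By the parallelogram law, the midpoint of two almost minimisers forces them to be close.\<close>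

lemma quadratic_perturbation_minimising_Cauchy:
  fixes g :: "'h::real_inner \<Rightarrow> real"
  assumes g: "convex_on D g" and xs: "\<And>k. xs k \<in> D"
    and m: "\<And>x. x \<in> D \<Longrightarrow> m \<le> g x + (norm (y - x))\<^sup>2 / 2"
    and xs_m: "\<And>k. g (xs k) + (norm (y - xs k))\<^sup>2 / 2 < m + 1 / (real k + 1)"
  shows "Cauchy xs"
proof (rule Cauchy_if_sq_dist_le)
  define h where "h x = g x + (norm (y - x))\<^sup>2 / 2" for x
  have mid: "(norm (a - b))\<^sup>2 \<le> 4 * (h a - m) + 4 * (h b - m)" if "a \<in> D" "b \<in> D" for a b
  proof -
    have "(1 - 1/2) *\<^sub>R a + (1/2) *\<^sub>R b \<in> D"
      using convexD[OF convex_on_imp_convex[OF g] that, of "1/2" "1/2"] by simp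
    moreover have "g ((1 - 1/2) *\<^sub>R a + (1/2) *\<^sub>R b) \<le> (1 - 1/2) * g a + (1/2) * g b"
      using convex_onD[OF g, of "1/2"] that by simp
    ultimately show ?thesis
      using m[of "(1/2) *\<^sub>R a + (1/2) *\<^sub>R b"]
      unfolding h_def norm_diff_midpoint_sq by (simp add: field_simps)
  qed
  show "(norm (xs j - xs k))\<^sup>2 \<le> 4 / (real j + 1) + 4 / (real k + 1)" for j k
    using mid[OF xs xs, of j k] xs_m[of j, folded h_def] xs_m[of k, folded h_def] by simp
  show "(\<lambda>k. 4 / (real k + 1)) \<longlonglongrightarrow> 0"
    using tendsto_mult_right_zero[OF LIMSEQ_inverse_real_of_nat, of 4]
    by (simp add: inverse_eq_divide add.commute)
qed

lemma quadratic_perturbation_min_exists: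
  fixes g :: "'h::{real_inner,complete_space} \<Rightarrow> real"
  assumes "D \<noteq> {}" and g: "convex_on D g" and cl: "\<And>c. closed {x \<in> D. g x \<le> c}"
    and lb: "\<And>x. x \<in> D \<Longrightarrow> m0 \<le> g x + (norm (y - x))\<^sup>2 / 2"
  shows "\<exists>p\<in>D. \<forall>x\<in>D. g p + (norm (y - p))\<^sup>2 / 2 \<le> g x + (norm (y - x))\<^sup>2 / 2"
proof -
  define h where "h x = g x + (norm (y - x))\<^sup>2 / 2" for x
  define m where "m = Inf (h ` D)"
  have hm: "m \<le> h x" if "x \<in> D" for x
    unfolding m_def using lb that by (auto intro!: cInf_lower bdd_belowI[of _ m0] simp: h_def)
  have "\<exists>x\<in>D. h x < m + 1 / (real k + 1)" for k
    using cInf_lessD[of "h ` D" "m + 1 / (real k + 1)"] \<open>D \<noteq> {}\<close> unfolding m_def by auto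
  then obtain xs where xsD: "\<And>k. xs k \<in> D" and xsm: "\<And>k. h (xs k) < m + 1 / (real k + 1)"
    by metis
  have "Cauchy xs"
    by (rule quadratic_perturbation_minimising_Cauchy[OF g xsD]) (use hm xsm in \<open>simp_all add: h_def\<close>)
  then obtain p where lim: "xs \<longlonglongrightarrow> p"
    using Cauchy_convergent_iff convergent_def by blast
  have below: "p \<in> D \<and> g p \<le> m + 2 * d - (norm (y - p))\<^sup>2 / 2" if "0 < d" for d
  proof -
    have "(\<lambda>k. (norm (y - xs k))\<^sup>2 / 2) \<longlonglongrightarrow> (norm (y - p))\<^sup>2 / 2"
      by (intro tendsto_intros lim) auto
    then have "\<forall>\<^sub>F k in sequentially. (norm (y - p))\<^sup>2 / 2 - d < (norm (y - xs k))\<^sup>2 / 2"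
      using that by (intro order_tendstoD(1)) auto
    moreover have "\<forall>\<^sub>F k in sequentially. 1 / (real k + 1) < d"
      using that LIMSEQ_inverse_real_of_nat
      by (intro order_tendstoD(2)) (auto simp: inverse_eq_divide add.commute)
    ultimately have "\<forall>\<^sub>F k in sequentially. xs k \<in> {x \<in> D. g x \<le> m + 2 * d - (norm (y - p))\<^sup>2 / 2}"
    proof eventually_elim
      case (elim k)
      then show ?case
        using xsm[of k] xsD[of k] unfolding h_def by auto
    qed
    from Lim_in_closed_set[OF cl this _ lim] show ?thesis
      by simp
  qed
  have "h p \<le> m"
  proof (rule ccontr)
    assume "\<not> h p \<le> m"
    with below[of "(h p - m) / 4"] show False
      unfolding h_def by (simp; argo)
  qed
  moreover have "p \<in> D"
    using below[of 1] by simp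
  ultimately show ?thesis
    using hm unfolding h_def by force
qed

text \<open>First-order condition: moving from the minimiser \<open>p\<close> towards \<open>x\<close> by a step \<open>t\<close>
  changes the objective by \<open>t (g x - g p - \<langle>x - p, y - p\<rangle>) + O(t\<^sup>2)\<close>.\<close>

lemma quadratic_perturbation_min_variational_ineq:
  fixes g :: "'h::real_inner \<Rightarrow> real"
  assumes g: "convex_on D g" and "p \<in> D" "x \<in> D"
    and min: "\<And>z. z \<in> D \<Longrightarrow> g p + (norm (y - p))\<^sup>2 / 2 \<le> g z + (norm (y - z))\<^sup>2 / 2"
  shows "g p + inner (x - p) (y - p) \<le> g x"
proof (rule ccontr)
  define dd where "dd = g p + inner (x - p) (y - p) - g x"
  assume "\<not> ?thesis"
  then have dd: "0 < dd"
    unfolding dd_def by simp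
  define t where "t = min (1/2) (dd / ((norm (x - p))\<^sup>2 + 1))"
  have t: "0 < t" "t < 1"
    using dd unfolding t_def by (auto intro!: divide_pos_pos add_nonneg_pos)
  have "(1 - t) *\<^sub>R p + t *\<^sub>R x \<in> D"
    using convex_on_imp_convex[OF g] assms(2,3) t by (auto simp: convex_alt)
  then have "g p + (norm (y - p))\<^sup>2 / 2
      \<le> g ((1 - t) *\<^sub>R p + t *\<^sub>R x) + (norm (y - ((1 - t) *\<^sub>R p + t *\<^sub>R x)))\<^sup>2 / 2"
    by (rule min)
  also have "\<dots> \<le> (1 - t) * g p + t * g x
      + ((norm (y - p))\<^sup>2 - 2 * t * inner (x - p) (y - p) + t\<^sup>2 * (norm (x - p))\<^sup>2) / 2"
    using convex_onD[OF g, of t p x] assms(2,3) t unfolding norm_diff_segment_sq by simp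
  finally have "t * (2 * dd) \<le> t * (t * (norm (x - p))\<^sup>2)"
    unfolding dd_def by (simp add: field_simps power2_eq_square)
  then have "2 * dd \<le> t * (norm (x - p))\<^sup>2"
    using t by simp
  also have "\<dots> \<le> dd / ((norm (x - p))\<^sup>2 + 1) * (norm (x - p))\<^sup>2"
    unfolding t_def by (intro mult_right_mono) auto
  also have "\<dots> \<le> dd"
    using dd by (simp add: field_simps add_pos_nonneg)
  finally show False
    using dd by simp
qed

lemma proximal_point_exists:
  fixes g :: "'h::{real_inner,complete_space} \<Rightarrow> real"
  assumes "D \<noteq> {}" and "convex_on D g" and "\<And>c. closed {x \<in> D. g x \<le> c}"
    and "\<And>x. x \<in> D \<Longrightarrow> m0 \<le> g x + (norm (y - x))\<^sup>2 / 2"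
  shows "\<exists>p\<in>D. \<forall>x\<in>D. g p + inner (x - p) (y - p) \<le> g x"
  using quadratic_perturbation_min_exists[OF assms] quadratic_perturbation_min_variational_ineq[OF assms(2)]
  by metis

lemma subspace_closure:
  fixes S :: "'h::real_normed_vector set"
  assumes S: "subspace S"
  shows "subspace (closure S)"
  unfolding subspace_def
proof (intro conjI ballI allI)
  show "0 \<in> closure S"
    using S closure_subset subspace_0 by blast
next
  fix a b
  assume "a \<in> closure S" "b \<in> closure S"
  then have "a + b \<in> closure (S + S)"
    using closure_sum set_plus_intro by blast
  moreover have "S + S \<subseteq> S"
    using S by (auto simp: set_plus_def subspace_add)
  ultimately show "a + b \<in> closure S"
    using closure_mono by blast
next
  fix c :: real and a
  assume "a \<in> closure S"
  then have "c *\<^sub>R a \<in> closure ((*\<^sub>R) c ` S)"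
    by (metis closure_scaleR image_eqI)
  moreover have "(*\<^sub>R) c ` S \<subseteq> S"
    using S by (auto simp: subspace_scale)
  ultimately show "c *\<^sub>R a \<in> closure S"
    using closure_mono by blast
qed

lemma orthogonal_projection_exists:
  fixes M :: "'h::{real_inner,complete_space} set"
  assumes M: "subspace M" "closed M"
  shows "\<exists>p\<in>M. \<forall>m\<in>M. inner m (y - p) = 0"
proof -
  have "convex_on M (\<lambda>_. 0::real)"
    using subspace_imp_convex[OF M(1)] by (intro convex_onI) auto
  moreover have "closed {x \<in> M. (0::real) \<le> c}" for c
    using M(2) by (cases "0 \<le> c") auto
  ultimately obtain p where "p \<in> M" and p: "\<And>x. x \<in> M \<Longrightarrow> inner (x - p) (y - p) \<le> 0"
    using proximal_point_exists[of M "\<lambda>_. 0" 0 y] subspace_0[OF M(1)] by fastforce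
  have "inner m (y - p) = 0" if "m \<in> M" for m
    using p[of "p + m"] p[of "p - m"] \<open>p \<in> M\<close> that M(1)
    by (simp add: subspace_add subspace_diff inner_diff_left)
  then show ?thesis
    using \<open>p \<in> M\<close> by blast
qed

lemma riesz_representation:
  fixes \<psi> :: "'h::{real_inner,complete_space} \<Rightarrow> real"
  assumes "bounded_linear \<psi>"
  shows "\<exists>w. \<forall>h. \<psi> h = inner h w"
proof -
  interpret bounded_linear \<psi> by fact
  obtain R where R: "\<And>x. norm (\<psi> x) \<le> norm x * R"
    using bounded by blast
  have "convex_on UNIV (\<lambda>v. - \<psi> v)"
    by (intro convex_onI) (auto simp: add scaleR)
  moreover have "closed {x \<in> UNIV. - \<psi> x \<le> c}" for c
    by (simp add: closed_Collect_le continuous_on_minus linear_continuous_on[OF assms])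
  moreover have "- (R\<^sup>2 / 2) \<le> - \<psi> x + (norm (0 - x))\<^sup>2 / 2" for x
  proof -
    have "\<psi> x \<le> R * norm x"
      using R[of x] by (simp add: mult.commute)
    moreover have "0 \<le> (norm x - R)\<^sup>2"
      by simp
    ultimately show ?thesis
      by (simp add: power2_diff algebra_simps)
  qed
  ultimately obtain w where w: "\<And>v. - \<psi> w + inner (v - w) (0 - w) \<le> - \<psi> v"
    using proximal_point_exists[of UNIV "\<lambda>v. - \<psi> v" "- (R\<^sup>2 / 2)" 0] by auto
  have "\<psi> h = inner h w" for h
    using w[of "w + h"] w[of "w - h"] by (simp add: add diff inner_diff_left)
  then show ?thesis
    by blast
qed

lemma inner_diagonal_subseq:
  fixes x :: "nat \<Rightarrow> 'h::real_inner"
  assumes bnd: "\<And>n. norm (x n) \<le> R"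
  shows "\<exists>r. strict_mono r \<and> (\<forall>m. convergent (\<lambda>n. inner (x (r n)) (x m)))"
proof -
  define P where "P m s \<longleftrightarrow> convergent (\<lambda>n. inner (x (s n)) (x m))" for m and s :: "nat \<Rightarrow> nat"
  interpret subseqs P
  proof
    fix m and s :: "nat \<Rightarrow> nat"
    have "\<bar>inner (x (s n)) (x m)\<bar> \<le> R * norm (x m)" for n
      using Cauchy_Schwarz_ineq2[of "x (s n)" "x m"] bnd[of "s n"]
      by (meson mult_right_mono norm_ge_zero order_trans)
    then have "bounded (range (\<lambda>n. inner (x (s n)) (x m)))"
      unfolding bounded_iff by auto
    then obtain l r where "strict_mono r" "((\<lambda>n. inner (x (s n)) (x m)) \<circ> r) \<longlonglongrightarrow> l"
      using bounded_imp_convergent_subsequence by blast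
    then show "\<exists>r'. strict_mono r' \<and> P m (s \<circ> r')"
      unfolding P_def convergent_def comp_def by auto
  qed
  define ds where "ds = diagseq"
  have "P m ds" for m
  proof -
    have "P m (ds \<circ> (+) (Suc m))"
      unfolding ds_def
    proof (rule diagseq_holds)
      fix r s n
      assume "strict_mono (r :: nat \<Rightarrow> nat)" "P n s"
      then show "P n (s \<circ> r)"
        unfolding P_def convergent_def comp_def using LIMSEQ_subseq_LIMSEQ[unfolded comp_def] by blast
    qed
    then show ?thesis
      unfolding P_def comp_def
      using convergent_ignore_initial_segment[of "\<lambda>n. inner (x (ds n)) (x m)" "Suc m"]
      by (simp add: add.commute)
  qed
  moreover have "strict_mono ds"
    unfolding ds_def by (rule subseq_diagseq)
  ultimately show ?thesis
    unfolding P_def by blast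
qed

lemma inner_convergent_closure_span:
  fixes X :: "nat \<Rightarrow> 'h::real_inner"
  assumes bnd: "\<And>n. norm (X n) \<le> R"
    and conv: "\<And>v. v \<in> V \<Longrightarrow> convergent (\<lambda>n. inner (X n) v)"
    and v: "v \<in> closure (span V)"
  shows "convergent (\<lambda>n. inner (X n) v)"
  unfolding Cauchy_convergent_iff[symmetric] Cauchy_def
proof (intro allI impI)
  fix e :: real
  assume e: "0 < e"
  have R: "0 \<le> R"
    using bnd[of 0] norm_ge_zero order_trans by blast
  have sub: "subspace {v. convergent (\<lambda>n. inner (X n) v)}"
    unfolding subspace_def
    by (auto simp: inner_add_right intro!: convergent_add convergent_mult convergent_const)
  have "span V \<subseteq> {v. convergent (\<lambda>n. inner (X n) v)}"
    by (rule span_minimal) (use conv sub in auto)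
  then have span_conv: "\<And>v. v \<in> span V \<Longrightarrow> convergent (\<lambda>n. inner (X n) v)"
    by blast
  have "0 < e / (3 * (R + 1))"
    using e R by simp
  then obtain v' where v': "v' \<in> span V" "dist v' v < e / (3 * (R + 1))"
    using v unfolding closure_approachable by blast
  have close: "\<bar>inner (X n) v - inner (X n) v'\<bar> \<le> e / 3" for n
  proof -
    have "\<bar>inner (X n) v - inner (X n) v'\<bar> = \<bar>inner (X n) (v - v')\<bar>"
      by (simp add: inner_diff_right)
    also have "\<dots> \<le> norm (X n) * norm (v - v')"
      by (rule Cauchy_Schwarz_ineq2)
    also have "\<dots> \<le> R * norm (v - v')"
      using bnd[of n] by (intro mult_right_mono) auto
    also have "\<dots> \<le> (R + 1) * (e / (3 * (R + 1)))"
      using v'(2) R by (intro mult_mono) (auto simp: dist_norm norm_minus_commute)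
    also have "\<dots> = e / 3"
      using R by (simp add: field_simps)
    finally show ?thesis .
  qed
  obtain N where N: "\<And>m n. N \<le> m \<Longrightarrow> N \<le> n \<Longrightarrow> dist (inner (X m) v') (inner (X n) v') < e / 3"
    using span_conv[OF v'(1)] e unfolding Cauchy_convergent_iff[symmetric] Cauchy_def
    by (meson divide_pos_pos zero_less_numeral)
  have "dist (inner (X m) v) (inner (X n) v) < e" if "N \<le> m" "N \<le> n" for m n
    using close[of m] close[of n] N[OF that] unfolding dist_real_def by linarith
  then show "\<exists>N. \<forall>m\<ge>N. \<forall>n\<ge>N. dist (inner (X m) v) (inner (X n) v) < e"
    by blast
qed

lemma inner_convergent_if_dense:
  fixes X :: "nat \<Rightarrow> 'h::{real_inner,complete_space}"
  assumes bnd: "\<And>n. norm (X n) \<le> R"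
    and conv: "\<And>v. v \<in> V \<Longrightarrow> convergent (\<lambda>n. inner (X n) v)"
    and X: "\<And>n. X n \<in> closure (span V)"
  shows "convergent (\<lambda>n. inner (X n) y)"
proof -
  obtain p where p: "p \<in> closure (span V)" and orth: "\<And>m. m \<in> closure (span V) \<Longrightarrow> inner m (y - p) = 0"
    using orthogonal_projection_exists[OF subspace_closure[OF subspace_span] closed_closure]
    by blast
  have "inner (X n) y = inner (X n) p" for n
    using orth[OF X[of n]] by (simp add: inner_diff_right)
  then show ?thesis
    using inner_convergent_closure_span[OF bnd conv p] by simp
qed

lemma weak_conv_if_inner_convergent:
  fixes X :: "nat \<Rightarrow> 'h::{real_inner,complete_space}"
  assumes bnd: "\<And>n. norm (X n) \<le> R" and conv: "\<And>y. convergent (\<lambda>n. inner (X n) y)"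
  shows "\<exists>w. weak_conv X w"
proof -
  define \<psi> where "\<psi> y = lim (\<lambda>n. inner (X n) y)" for y
  have lim: "(\<lambda>n. inner (X n) y) \<longlonglongrightarrow> \<psi> y" for y
    unfolding \<psi>_def using conv convergent_LIMSEQ_iff by blast
  have "bounded_linear \<psi>"
  proof (rule bounded_linear_intro[where K = "\<bar>R\<bar>"])
    show "\<psi> (a + b) = \<psi> a + \<psi> b" for a b
    proof (rule LIMSEQ_unique[OF lim])
      show "(\<lambda>n. inner (X n) (a + b)) \<longlonglongrightarrow> \<psi> a + \<psi> b"
        unfolding inner_add_right by (intro tendsto_add lim)
    qed
    show "\<psi> (c *\<^sub>R a) = c *\<^sub>R \<psi> a" for c a
    proof (rule LIMSEQ_unique[OF lim])
      show "(\<lambda>n. inner (X n) (c *\<^sub>R a)) \<longlonglongrightarrow> c *\<^sub>R \<psi> a"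
        unfolding inner_scaleR_right real_scaleR_def by (intro tendsto_mult_left lim)
    qed
    show "norm (\<psi> a) \<le> norm a * \<bar>R\<bar>" for a
    proof (rule LIMSEQ_le_const2[OF tendsto_norm[OF lim]])
      have "norm (inner (X n) a) \<le> norm a * \<bar>R\<bar>" for n
      proof -
        have "norm (inner (X n) a) \<le> norm (X n) * norm a"
          using Cauchy_Schwarz_ineq2 by simp
        also have "\<dots> \<le> \<bar>R\<bar> * norm a"
          using bnd[of n] by (intro mult_right_mono) auto
        finally show ?thesis
          by (simp add: mult.commute)
      qed
      then show "\<exists>N. \<forall>n\<ge>N. norm (inner (X n) a) \<le> norm a * \<bar>R\<bar>"
        by blast
    qed
  qed
  then obtain w where "\<And>h. \<psi> h = inner h w"
    using riesz_representation by blast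
  then have "weak_conv X w"
    unfolding weak_conv_def using lim by (simp add: inner_commute)
  then show ?thesis ..
qed

lemma bounded_imp_weak_conv_subseq:
  fixes x :: "nat \<Rightarrow> 'h::{real_inner,complete_space}"
  assumes bnd: "\<And>n. norm (x n) \<le> R"
  shows "\<exists>r w. strict_mono r \<and> weak_conv (x \<circ> r) w"
proof -
  obtain r where r: "strict_mono r" and conv: "\<And>m. convergent (\<lambda>n. inner (x (r n)) (x m))"
    using inner_diagonal_subseq[where x = x, OF bnd] by blast
  have "\<And>n. (x \<circ> r) n \<in> closure (span (range x))"
    using closure_subset span_superset by fastforce
  then have "convergent (\<lambda>n. inner ((x \<circ> r) n) y)" for y
    using inner_convergent_if_dense[of "x \<circ> r" R "range x"] bnd conv by auto
  then obtain w where "weak_conv (x \<circ> r) w"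
    using weak_conv_if_inner_convergent[of "x \<circ> r" R] bnd by auto
  with r show ?thesis
    by blast
qed

lemma subdiff_finite_value:
  assumes "proper_fun f" "u \<in> subdiff f x"
  shows "f x \<noteq> \<infinity>" "f x \<noteq> -\<infinity>"
proof -
  obtain x' where "f x' \<noteq> \<infinity>"
    using assms(1) unfolding proper_fun_def by blast
  moreover have "f x + ereal (inner (x' - x) u) \<le> f x'"
    using assms(2) unfolding subdiff_def by blast
  ultimately show "f x \<noteq> \<infinity>"
    by auto
  show "f x \<noteq> -\<infinity>"
    using assms(1) unfolding proper_fun_def by blast
qed

lemma subdiff_monotone:
  assumes "proper_fun f" "u \<in> subdiff f x" "v \<in> subdiff f x'"
  shows "0 \<le> inner (x - x') (u - v)"
proof -
  obtain a b where a: "f x = ereal a" and b: "f x' = ereal b"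
    using subdiff_finite_value[OF assms(1,2)] subdiff_finite_value[OF assms(1,3)]
    by (cases "f x"; cases "f x'") auto
  have "f x + ereal (inner (x' - x) u) \<le> f x'" "f x' + ereal (inner (x - x') v) \<le> f x"
    using assms(2,3) unfolding subdiff_def by blast+
  then have "a + inner (x' - x) u \<le> b" "b + inner (x - x') v \<le> a"
    using a b by simp_all
  moreover have "inner (x - x') (u - v) = - (inner (x' - x) u + inner (x - x') v)"
    by (simp add: inner_diff_left inner_diff_right algebra_simps inner_commute)
  ultimately show ?thesis
    by linarith
qed

lemma subdiff_imp_prox_growth:
  fixes f :: "'h::real_inner \<Rightarrow> ereal"
  assumes "proper_fun f" "0 < \<gamma>" "(1/\<gamma>) *\<^sub>R (y - p) \<in> subdiff f p"
  shows "ereal \<gamma> * f p + ereal ((norm (y - p))\<^sup>2 / 2 + (norm (x - p))\<^sup>2 / 2)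
      \<le> ereal \<gamma> * f x + ereal ((norm (y - x))\<^sup>2 / 2)"
proof -
  obtain a where a: "f p = ereal a"
    using subdiff_finite_value[OF assms(1,3)] by (cases "f p") auto
  show ?thesis
  proof (cases "f x")
    case (real r)
    have "f p + ereal (inner (x - p) ((1/\<gamma>) *\<^sub>R (y - p))) \<le> f x"
      using assms(3) unfolding subdiff_def by blast
    then have "a + inner (x - p) (y - p) / \<gamma> \<le> r"
      using a real by simp
    then have "\<gamma> * a + inner (x - p) (y - p) \<le> \<gamma> * r"
      using assms(2) by (simp add: field_simps)
    moreover have "(norm (y - x))\<^sup>2 = (norm (y - p))\<^sup>2 - 2 * inner (x - p) (y - p) + (norm (x - p))\<^sup>2"
      unfolding power2_norm_eq_inner by (simp add: inner_diff_left inner_diff_right inner_commute)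
    ultimately have "\<gamma> * a + ((norm (y - p))\<^sup>2 / 2 + (norm (x - p))\<^sup>2 / 2) \<le> \<gamma> * r + (norm (y - x))\<^sup>2 / 2"
      by linarith
    then show ?thesis
      using a real by simp
  next
    case PInf
    then show ?thesis
      using assms(2) a by simp
  next
    case MInf
    then show ?thesis
      using assms(1) unfolding proper_fun_def by simp
  qed
qed

lemma prox_eqI:
  fixes f :: "'h::real_inner \<Rightarrow> ereal"
  assumes f: "proper_fun f" and "0 < \<gamma>" and p: "(1/\<gamma>) *\<^sub>R (y - p) \<in> subdiff f p"
  shows "prox (\<lambda>z. ereal \<gamma> * f z) y = p"
  unfolding prox_def
proof (rule the_equality)
  note growth = subdiff_imp_prox_growth[OF assms]
  have "ereal \<gamma> * f p + ereal ((norm (y - p))\<^sup>2 / 2)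
      \<le> ereal \<gamma> * f p + ereal ((norm (y - p))\<^sup>2 / 2 + (norm (x - p))\<^sup>2 / 2)" for x
    by (intro add_left_mono) simp
  then show "\<forall>x. ereal \<gamma> * f p + ereal ((norm (y - p))\<^sup>2 / 2) \<le> ereal \<gamma> * f x + ereal ((norm (y - x))\<^sup>2 / 2)"
    using growth order.trans by blast
  fix q
  assume "\<forall>x. ereal \<gamma> * f q + ereal ((norm (y - q))\<^sup>2 / 2) \<le> ereal \<gamma> * f x + ereal ((norm (y - x))\<^sup>2 / 2)"
  then have "ereal \<gamma> * f p + ereal ((norm (y - p))\<^sup>2 / 2 + (norm (q - p))\<^sup>2 / 2)
      \<le> ereal \<gamma> * f p + ereal ((norm (y - p))\<^sup>2 / 2)"
    using growth[of q] order.trans by blast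
  moreover obtain a where "f p = ereal a"
    using subdiff_finite_value[OF f p] by (cases "f p") auto
  ultimately have "(norm (q - p))\<^sup>2 \<le> 0"
    by simp
  then show "q = p"
    by simp
qed

lemma Gamma0_real_part_convex_on:
  assumes "Gamma0 f"
  shows "convex_on {x. f x \<noteq> \<infinity>} (\<lambda>x. real_of_ereal (f x))"
proof -
  define D where "D = {x. f x \<noteq> \<infinity>}"
  define r where "r x = real_of_ereal (f x)" for x
  have fin: "f x = ereal (r x)" if "x \<in> D" for x
    using that assms unfolding D_def r_def Gamma0_def proper_fun_def by (cases "f x") auto
  have comb: "f ((1 - t) *\<^sub>R a + t *\<^sub>R b) \<le> ereal ((1 - t) * r a + t * r b)"
    if "a \<in> D" "b \<in> D" "0 < t" "t < 1" for a b t
  proof -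
    have "f ((1 - t) *\<^sub>R a + t *\<^sub>R b) \<le> ereal (1 - t) * f a + ereal t * f b"
      using assms that unfolding Gamma0_def ereal_convex_def by blast
    also have "\<dots> = ereal ((1 - t) * r a + t * r b)"
      using fin that by simp
    finally show ?thesis .
  qed
  have "convex D"
    unfolding convex_alt
  proof (intro ballI allI impI)
    fix a b and t :: real
    assume "a \<in> D" "b \<in> D" "0 \<le> t \<and> t \<le> 1"
    then show "(1 - t) *\<^sub>R a + t *\<^sub>R b \<in> D"
      using comb[of a b t] by (cases "t = 0 \<or> t = 1") (auto simp: D_def)
  qed
  then have "convex_on D r"
  proof (rule convex_onI[rotated])
    fix t :: real and x y
    assume "0 < t" "t < 1" "x \<in> D" "y \<in> D"
    moreover from this have "(1 - t) *\<^sub>R x + t *\<^sub>R y \<in> D"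
      using comb[of x y t] by (auto simp: D_def)
    ultimately show "r ((1 - t) *\<^sub>R x + t *\<^sub>R y) \<le> (1 - t) * r x + t * r y"
      using comb[of x y t] fin by fastforce
  qed
  then show ?thesis
    unfolding D_def r_def .
qed

lemma Gamma0_real_part_sublevel_closed:
  assumes "Gamma0 f"
  shows "closed {x \<in> {x. f x \<noteq> \<infinity>}. real_of_ereal (f x) \<le> c}"
proof -
  have "f x \<noteq> \<infinity> \<and> real_of_ereal (f x) \<le> c \<longleftrightarrow> f x \<le> ereal c" for x
    using assms unfolding Gamma0_def proper_fun_def by (cases "f x") auto
  then have "{x \<in> {x. f x \<noteq> \<infinity>}. real_of_ereal (f x) \<le> c} = {x. f x \<le> ereal c}"
    by blast
  then show ?thesis
    using assms unfolding Gamma0_def lsc_def by simp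
qed

text \<open>Completing the square in the subgradient inequality at \<open>z\<^sub>0\<close>.\<close>

lemma subdiff_imp_quadratic_minorant:
  fixes f :: "'h::real_inner \<Rightarrow> ereal"
  assumes "u0 \<in> subdiff f z0" "f z0 = ereal a" "f x = ereal b" "0 < \<gamma>"
  shows "\<gamma> * a + \<gamma> * inner (y - z0) u0 - \<gamma>\<^sup>2 * (norm u0)\<^sup>2 / 2 \<le> \<gamma> * b + (norm (y - x))\<^sup>2 / 2"
proof -
  have "f z0 + ereal (inner (x - z0) u0) \<le> f x"
    using assms(1) unfolding subdiff_def by blast
  then have "\<gamma> * (a + inner (x - z0) u0) \<le> \<gamma> * b"
    using assms(2-4) by simp
  moreover have "0 \<le> (norm ((x - y) + \<gamma> *\<^sub>R u0))\<^sup>2"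
    by simp
  moreover have "(norm ((x - y) + \<gamma> *\<^sub>R u0))\<^sup>2
      = (norm (y - x))\<^sup>2 + 2 * (\<gamma> * inner (x - z0) u0) - 2 * (\<gamma> * inner (y - z0) u0) + \<gamma>\<^sup>2 * (norm u0)\<^sup>2"
    unfolding power2_norm_eq_inner
    by (simp add: inner_diff_left inner_diff_right inner_add_left inner_add_right inner_commute
        algebra_simps power2_eq_square)
  ultimately show ?thesis
    by (simp add: distrib_left)
qed

lemma Gamma0_resolvent_exists:
  fixes f :: "'h::{real_inner,complete_space} \<Rightarrow> ereal"
  assumes f: "Gamma0 f" and u0: "u0 \<in> subdiff f z0" and "0 < \<gamma>"
  shows "\<exists>p. (1/\<gamma>) *\<^sub>R (y - p) \<in> subdiff f p"
proof -
  have pf: "proper_fun f"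
    using f unfolding Gamma0_def by auto
  define D where "D = {x. f x \<noteq> \<infinity>}"
  define r where "r x = real_of_ereal (f x)" for x
  have fin: "f x = ereal (r x)" if "x \<in> D" for x
    using that pf unfolding D_def r_def proper_fun_def by (cases "f x") auto
  have conv: "convex_on D (\<lambda>x. \<gamma> * r x)"
    using convex_on_cmul[OF _ Gamma0_real_part_convex_on[OF f], of \<gamma>] \<open>0 < \<gamma>\<close>
    unfolding D_def r_def by simp
  have cl: "closed {x \<in> D. \<gamma> * r x \<le> c}" for c
  proof -
    have "{x \<in> D. \<gamma> * r x \<le> c} = {x \<in> D. r x \<le> c / \<gamma>}"
      using \<open>0 < \<gamma>\<close> by (auto simp: pos_le_divide_eq mult.commute)
    then show ?thesis
      using Gamma0_real_part_sublevel_closed[OF f] unfolding D_def r_def by simp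
  qed
  have z0: "z0 \<in> D"
    using subdiff_finite_value[OF pf u0] unfolding D_def by auto
  then have lb: "\<gamma> * r z0 + \<gamma> * inner (y - z0) u0 - \<gamma>\<^sup>2 * (norm u0)\<^sup>2 / 2 \<le> \<gamma> * r x + (norm (y - x))\<^sup>2 / 2"
    if "x \<in> D" for x
    using subdiff_imp_quadratic_minorant[OF u0 fin fin[OF that] \<open>0 < \<gamma>\<close>] by blast
  obtain p where pD: "p \<in> D" and p: "\<And>x. x \<in> D \<Longrightarrow> \<gamma> * r p + inner (x - p) (y - p) \<le> \<gamma> * r x"
    using proximal_point_exists[OF _ conv cl lb] z0 by blast
  have "f p + ereal (inner (x - p) ((1/\<gamma>) *\<^sub>R (y - p))) \<le> f x" for x
  proof (cases "x \<in> D")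
    case True
    then have "r p + inner (x - p) (y - p) / \<gamma> \<le> r x"
      using p[OF True] \<open>0 < \<gamma>\<close> by (simp add: field_simps)
    then show ?thesis
      using fin[OF True] fin[OF pD] by simp
  qed (simp add: D_def)
  then show ?thesis
    unfolding subdiff_def by blast
qed

lemma prox_in_subdiff:
  fixes f :: "'h::{real_inner,complete_space} \<Rightarrow> ereal"
  assumes f: "Gamma0 f" and "u0 \<in> subdiff f z0" and "0 < \<gamma>"
  shows "(1/\<gamma>) *\<^sub>R (y - prox (\<lambda>z. ereal \<gamma> * f z) y) \<in> subdiff f (prox (\<lambda>z. ereal \<gamma> * f z) y)"
proof -
  obtain p where "(1/\<gamma>) *\<^sub>R (y - p) \<in> subdiff f p"
    using Gamma0_resolvent_exists[OF assms] by blast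
  moreover from this have "prox (\<lambda>z. ereal \<gamma> * f z) y = p"
    using f \<open>0 < \<gamma>\<close> by (intro prox_eqI) (auto simp: Gamma0_def)
  ultimately show ?thesis
    by simp
qed

lemma prox_nonexpansive:
  fixes f :: "'h::{real_inner,complete_space} \<Rightarrow> ereal"
  assumes f: "Gamma0 f" and "u0 \<in> subdiff f z0" and "0 < \<gamma>"
  shows "norm (prox (\<lambda>z. ereal \<gamma> * f z) y - prox (\<lambda>z. ereal \<gamma> * f z) y') \<le> norm (y - y')"
proof -
  define p p' where "p = prox (\<lambda>z. ereal \<gamma> * f z) y" and "p' = prox (\<lambda>z. ereal \<gamma> * f z) y'"
  have "0 \<le> inner (p - p') ((1/\<gamma>) *\<^sub>R (y - p) - (1/\<gamma>) *\<^sub>R (y' - p'))"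
    using f prox_in_subdiff[OF assms] unfolding p_def p'_def
    by (intro subdiff_monotone) (auto simp: Gamma0_def)
  then have "0 \<le> inner (p - p') ((y - p) - (y' - p'))"
    using \<open>0 < \<gamma>\<close> by (simp add: scaleR_diff_right[symmetric] zero_le_divide_iff)
  then have "(norm (p - p'))\<^sup>2 \<le> inner (p - p') (y - y')"
    by (simp add: power2_norm_eq_inner inner_diff_right algebra_simps)
  also have "\<dots> \<le> norm (p - p') * norm (y - y')"
    using Cauchy_Schwarz_ineq2 abs_le_iff by blast
  finally have "norm (p - p') * norm (p - p') \<le> norm (p - p') * norm (y - y')"
    by (simp add: power2_eq_square)
  then have "norm (p - p') \<le> norm (y - y')"
    using mult_le_cancel_left_pos[of "norm (p - p')"] by (cases "p = p'") auto
  then show ?thesis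
    unfolding p_def p'_def .
qed

lemma convex_on_line:
  fixes h :: "'h::real_vector \<Rightarrow> real"
  assumes "convex_on UNIV h"
  shows "convex_on UNIV (\<lambda>t::real. h (a + t *\<^sub>R d))"
proof (rule convex_onI)
  fix t x y :: real
  assume "0 < t" "t < 1"
  moreover have "a + ((1 - t) *\<^sub>R x + t *\<^sub>R y) *\<^sub>R d = (1 - t) *\<^sub>R (a + x *\<^sub>R d) + t *\<^sub>R (a + y *\<^sub>R d)"
    by (simp add: algebra_simps)
  ultimately show "h (a + ((1 - t) *\<^sub>R x + t *\<^sub>R y) *\<^sub>R d) \<le> (1 - t) * h (a + x *\<^sub>R d) + t * h (a + y *\<^sub>R d)"
    using convex_onD[OF assms, of t] by simp
qed simp

lemma convex_on_line_above_tangent: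
  fixes L :: "'h::real_inner \<Rightarrow> real"
  assumes conv: "convex_on UNIV (\<lambda>t::real. L (z + t *\<^sub>R d))"
    and der: "(L has_derivative (\<lambda>h. inner h D)) (at z)"
  shows "inner d D \<le> L (z + d) - L z"
proof -
  have "((\<lambda>t::real. z + t *\<^sub>R d) has_derivative (\<lambda>t. t *\<^sub>R d)) (at 0)"
    by (auto intro!: derivative_eq_intros)
  moreover have "(L has_derivative (\<lambda>h. inner h D)) (at ((\<lambda>t::real. z + t *\<^sub>R d) 0))"
    using der by simp
  ultimately have "((\<lambda>t. L (z + t *\<^sub>R d)) has_derivative (\<lambda>t. t * inner d D)) (at 0)"
    using has_derivative_compose by fastforce
  moreover have "(\<lambda>t. t * inner d D) = (*) (inner d D)"
    by (auto simp: fun_eq_iff)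
  ultimately have "((\<lambda>t. L (z + t *\<^sub>R d)) has_field_derivative inner d D) (at 0 within UNIV)"
    unfolding has_field_derivative_def by simp
  from convex_on_imp_above_tangent[OF conv _ _ _ this, of 1]
  show ?thesis
    by simp
qed

locale convex_concave =
  fixes L :: "'a::real_inner \<times> 'b::real_inner \<Rightarrow> real" and G :: "'a \<times> 'b \<Rightarrow> 'a \<times> 'b"
  assumes L_grad: "\<And>z. GDERIV L z :> G z"
    and L_concave: "\<And>u1. concave_on UNIV (\<lambda>u2. L (u1, u2))"
    and L_convex: "\<And>u2. convex_on UNIV (\<lambda>u1. L (u1, u2))"
begin

lemma fst_gradient_le: "inner d (fst (G (z1, z2))) \<le> L (z1 + d, z2) - L (z1, z2)"
proof -
  have "convex_on UNIV (\<lambda>t::real. L ((z1, z2) + t *\<^sub>R (d, 0)))"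
    using convex_on_line[OF L_convex, of z1 d] by simp
  from convex_on_line_above_tangent[OF this] L_grad[of "(z1, z2)"]
  have "inner (d, 0) (G (z1, z2)) \<le> L ((z1, z2) + (d, 0)) - L (z1, z2)"
    by (simp add: gderiv_def)
  then show ?thesis
    by (cases "G (z1, z2)") simp
qed

lemma snd_gradient_ge: "L (z1, z2 + d) - L (z1, z2) \<le> inner d (snd (G (z1, z2)))"
proof -
  have "convex_on UNIV (\<lambda>t::real. - L ((z1, z2) + t *\<^sub>R (0, d)))"
    using convex_on_line[OF L_concave[of z1, unfolded concave_on_def], of z2 d] by simp
  moreover have "((\<lambda>x. - L x) has_derivative (\<lambda>h. inner h (- G (z1, z2)))) (at (z1, z2))"
    using has_derivative_minus[OF L_grad[of "(z1, z2)", unfolded gderiv_def]] by simp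
  ultimately have "inner (0, d) (- G (z1, z2)) \<le> - L ((z1, z2) + (0, d)) + L (z1, z2)"
    using convex_on_line_above_tangent[of "\<lambda>x. - L x"] by fastforce
  then show ?thesis
    by (cases "G (z1, z2)") simp
qed

definition saddle_operator :: "'a \<times> 'b \<Rightarrow> 'a \<times> 'b" where
  "saddle_operator z = (fst (G z), - snd (G z))"

lemma saddle_operator_monotone: "0 \<le> inner (w - z) (saddle_operator w - saddle_operator z)"
proof -
  obtain w1 w2 z1 z2 where wz: "w = (w1, w2)" "z = (z1, z2)"
    by fastforce
  have "inner (w1 - z1) (fst (G (z1, z2))) \<le> L (w1, z2) - L (z1, z2)"
    "inner (z1 - w1) (fst (G (w1, w2))) \<le> L (z1, w2) - L (w1, w2)"
    "L (z1, w2) - L (z1, z2) \<le> inner (w2 - z2) (snd (G (z1, z2)))"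
    "L (w1, z2) - L (w1, w2) \<le> inner (z2 - w2) (snd (G (w1, w2)))"
    using fst_gradient_le[of "w1 - z1" z1 z2] fst_gradient_le[of "z1 - w1" w1 w2]
      snd_gradient_ge[of z1 z2 "w2 - z2"] snd_gradient_ge[of w1 w2 "z2 - w2"] by simp_all
  moreover have "inner (z1 - w1) (fst (G (w1, w2))) = - inner (w1 - z1) (fst (G (w1, w2)))"
    "inner (z2 - w2) (snd (G (w1, w2))) = - inner (w2 - z2) (snd (G (w1, w2)))"
    by (simp_all add: inner_diff_left)
  ultimately show ?thesis
    unfolding wz saddle_operator_def by (simp add: inner_diff_right algebra_simps)
qed

lemma saddle_operator_lipschitz:
  assumes "lipschitz_on \<kappa> UNIV G"
  shows "norm (saddle_operator u - saddle_operator v) \<le> \<kappa> * norm (u - v)"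
proof -
  have "norm (saddle_operator u - saddle_operator v) = norm (G u - G v)"
    unfolding saddle_operator_def by (cases "G u", cases "G v") (simp add: norm_Pair norm_minus_commute)
  also have "\<dots> \<le> \<kappa> * norm (u - v)"
    using assms unfolding lipschitz_on_def dist_norm by blast
  finally show ?thesis .
qed

lemma saddle_point_if_subdiff:
  assumes f: "proper_fun f" and sol: "- saddle_operator (w1, w2) \<in> subdiff f (w1, w2)"
  shows "w1 \<in> Argmin (\<lambda>x. f (x, w2) + ereal (L (x, w2)))"
    and "w2 \<in> Argmin (\<lambda>x. f (w1, x) - ereal (L (w1, x)))"
proof -
  obtain a where a: "f (w1, w2) = ereal a"
    using subdiff_finite_value[OF f sol] by (cases "f (w1, w2)") auto
  have sub: "ereal (a + inner (y - (w1, w2)) (- saddle_operator (w1, w2))) \<le> f y" for y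
    using sol a unfolding subdiff_def by fastforce
  show "w1 \<in> Argmin (\<lambda>x. f (x, w2) + ereal (L (x, w2)))"
    unfolding Argmin_def
  proof safe
    fix x
    let ?c = "inner (x - w1) (fst (G (w1, w2)))"
    have "ereal (a - ?c) \<le> f (x, w2)"
      using sub[of "(x, w2)"] by (simp add: saddle_operator_def)
    moreover have "L (w1, w2) + ?c \<le> L (x, w2)"
      using fst_gradient_le[of "x - w1" w1 w2] by simp
    ultimately have "ereal (a - ?c) + ereal (L (w1, w2) + ?c) \<le> f (x, w2) + ereal (L (x, w2))"
      by (intro add_mono) auto
    then show "f (w1, w2) + ereal (L (w1, w2)) \<le> f (x, w2) + ereal (L (x, w2))"
      using a by simp
  qed
  show "w2 \<in> Argmin (\<lambda>x. f (w1, x) - ereal (L (w1, x)))"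
    unfolding Argmin_def
  proof safe
    fix x
    let ?c = "inner (x - w2) (snd (G (w1, w2)))"
    have A: "ereal (a + ?c) \<le> f (w1, x)"
      using sub[of "(w1, x)"] by (simp add: saddle_operator_def)
    have B: "- L (w1, w2) - ?c \<le> - L (w1, x)"
      using snd_gradient_ge[of w1 w2 "x - w2"] by simp
    show "f (w1, w2) - ereal (L (w1, w2)) \<le> f (w1, x) - ereal (L (w1, x))"
      using A B a by (cases "f (w1, x)") auto
  qed
qed

end

lemma quasi_fejer_convergent:
  fixes a e :: "nat \<Rightarrow> real"
  assumes "\<And>n. 0 \<le> a n" and step: "\<And>n. a (Suc n) \<le> a n + e n"
    and "\<And>n. 0 \<le> e n" and "summable e"
  shows "convergent a"
proof -
  define b where "b n = a n - (\<Sum>i<n. e i)" for n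
  have "decseq b"
    unfolding decseq_Suc_iff b_def using step by (simp add: algebra_simps)
  moreover have "- suminf e \<le> b n" for n
    using sum_le_suminf[OF \<open>summable e\<close>, of "{..<n}"] assms(1,3)[of n] assms(3)
    unfolding b_def by fastforce
  ultimately obtain l where "b \<longlonglongrightarrow> l"
    using decseq_convergent by blast
  then have "(\<lambda>n. b n + (\<Sum>i<n. e i)) \<longlonglongrightarrow> l + suminf e"
    by (intro tendsto_add summable_LIMSEQ \<open>summable e\<close>)
  then show ?thesis
    unfolding b_def convergent_def by auto
qed

text \<open>If \<open>\<parallel>Z n - w\<parallel>\<close> converges for two weak cluster points \<open>w\<^sub>0, w\<^sub>1\<close>, then
  \<open>\<langle>Z n, w\<^sub>0 - w\<^sub>1\<rangle>\<close> converges (polarisation), and its limit is both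
  \<open>\<langle>w\<^sub>0, w\<^sub>0 - w\<^sub>1\<rangle>\<close> and \<open>\<langle>w\<^sub>1, w\<^sub>0 - w\<^sub>1\<rangle>\<close>.\<close>

lemma weak_cluster_point_unique:
  fixes Z :: "nat \<Rightarrow> 'h::real_inner"
  assumes "convergent (\<lambda>n. norm (Z n - w0))" "convergent (\<lambda>n. norm (Z n - w1))"
    and r0: "strict_mono r0" "weak_conv (Z \<circ> r0) w0"
    and r1: "strict_mono r1" "weak_conv (Z \<circ> r1) w1"
  shows "w0 = w1"
proof -
  define c where "c n = inner (Z n) (w0 - w1)" for n
  have c_eq: "c n = ((norm (Z n - w1))\<^sup>2 - (norm (Z n - w0))\<^sup>2 - (norm w1)\<^sup>2 + (norm w0)\<^sup>2) / 2" for n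
    unfolding c_def power2_norm_eq_inner
    by (simp add: inner_diff_left inner_diff_right inner_commute algebra_simps)
  obtain l0 l1 where "(\<lambda>n. norm (Z n - w0)) \<longlonglongrightarrow> l0" "(\<lambda>n. norm (Z n - w1)) \<longlonglongrightarrow> l1"
    using assms(1,2) unfolding convergent_def by blast
  then have "c \<longlonglongrightarrow> (l1\<^sup>2 - l0\<^sup>2 - (norm w1)\<^sup>2 + (norm w0)\<^sup>2) / 2"
    unfolding c_eq by (intro tendsto_intros) auto
  then obtain l where l: "c \<longlonglongrightarrow> l"
    by blast
  have "(c \<circ> r0) \<longlonglongrightarrow> inner w0 (w0 - w1)" "(c \<circ> r1) \<longlonglongrightarrow> inner w1 (w0 - w1)"
    using r0(2) r1(2) unfolding weak_conv_def c_def comp_def by blast+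
  then have "inner w0 (w0 - w1) = l" "inner w1 (w0 - w1) = l"
    using LIMSEQ_subseq_LIMSEQ[OF l r0(1)] LIMSEQ_subseq_LIMSEQ[OF l r1(1)] LIMSEQ_unique by blast+
  then have "inner (w0 - w1) (w0 - w1) = 0"
    by (simp add: inner_diff_left)
  then show ?thesis
    by simp
qed

lemma opial:
  fixes Z :: "nat \<Rightarrow> 'h::{real_inner,complete_space}"
  assumes bnd: "\<And>n. norm (Z n) \<le> K"
    and conv: "\<And>w. w \<in> S \<Longrightarrow> convergent (\<lambda>n. norm (Z n - w))"
    and clus: "\<And>r w. strict_mono r \<Longrightarrow> weak_conv (Z \<circ> r) w \<Longrightarrow> w \<in> S"
  shows "\<exists>w\<in>S. weak_conv Z w"
proof -
  obtain r0 w0 where r0: "strict_mono r0" "weak_conv (Z \<circ> r0) w0"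
    using bounded_imp_weak_conv_subseq[of Z K, OF bnd] by blast
  have "(\<lambda>n. inner (Z n) y) \<longlonglongrightarrow> inner w0 y" for y
  proof (rule ccontr)
    assume "\<not> (\<lambda>n. inner (Z n) y) \<longlonglongrightarrow> inner w0 y"
    then obtain e where "0 < e" and far: "\<And>m. \<exists>n\<ge>m. e \<le> \<bar>inner (Z n) y - inner w0 y\<bar>"
      unfolding LIMSEQ_iff by (auto simp: not_less)
    have "infinite {n. e \<le> \<bar>inner (Z n) y - inner w0 y\<bar>}"
      unfolding infinite_nat_iff_unbounded_le using far by blast
    then obtain r1 :: "nat \<Rightarrow> nat" where r1: "strict_mono r1"
      and r1_far: "\<And>k. e \<le> \<bar>inner (Z (r1 k)) y - inner w0 y\<bar>"
      using infinite_enumerate by blast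
    obtain r2 w1 where r2: "strict_mono r2" "weak_conv ((Z \<circ> r1) \<circ> r2) w1"
      using bounded_imp_weak_conv_subseq[of "Z \<circ> r1" K] bnd by auto
    have r12: "strict_mono (r1 \<circ> r2)" "weak_conv (Z \<circ> (r1 \<circ> r2)) w1"
      using strict_mono_o[OF r1 r2(1)] r2(2) by (simp_all add: o_assoc)
    then have "w0 = w1"
      using weak_cluster_point_unique[OF conv conv r0 r12] clus r0 by blast
    then have "(\<lambda>k. inner (Z (r1 (r2 k))) y) \<longlonglongrightarrow> inner w0 y"
      using r12(2) unfolding weak_conv_def comp_def by blast
    then obtain k where "\<bar>inner (Z (r1 (r2 k))) y - inner w0 y\<bar> < e"
      using \<open>0 < e\<close> unfolding LIMSEQ_iff by auto
    with r1_far show False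
      by (meson not_less)
  qed
  then show ?thesis
    using clus[OF r0] unfolding weak_conv_def by blast
qed

lemma weak_conv_if_norm_diff_tendsto_zero:
  fixes Z P :: "nat \<Rightarrow> 'h::real_inner"
  assumes "weak_conv Z w" "(\<lambda>n. norm (Z n - P n)) \<longlonglongrightarrow> 0"
  shows "weak_conv P w"
  unfolding weak_conv_def
proof
  fix y
  have "(\<lambda>n. inner (Z n - P n) y) \<longlonglongrightarrow> 0"
  proof (rule Lim_null_comparison)
    show "\<forall>\<^sub>F n in sequentially. norm (inner (Z n - P n) y) \<le> norm (Z n - P n) * norm y"
      by (simp add: Cauchy_Schwarz_ineq2)
    show "(\<lambda>n. norm (Z n - P n) * norm y) \<longlonglongrightarrow> 0"
      using tendsto_mult_left_zero[OF assms(2)] by simp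
  qed
  with assms(1) have "(\<lambda>n. inner (Z n) y - inner (Z n - P n) y) \<longlonglongrightarrow> inner w y - 0"
    unfolding weak_conv_def by (intro tendsto_diff) auto
  then show "(\<lambda>n. inner (P n) y) \<longlonglongrightarrow> inner w y"
    by (simp add: inner_diff_left)
qed

lemma weak_conv_PairD:
  assumes "weak_conv (\<lambda>n. (x1 n, x2 n)) (w1, w2)"
  shows "weak_conv x1 w1" "weak_conv x2 w2"
  using assms[unfolded weak_conv_def, rule_format, of "(_, 0)"]
    assms[unfolded weak_conv_def, rule_format, of "(0, _)"]
  unfolding weak_conv_def by simp_all

lemma tseng_step_fejer:
  fixes B :: "'h::real_inner \<Rightarrow> 'h"
  assumes f: "proper_fun f"
    and mono: "\<And>u v. 0 \<le> inner (u - v) (B u - B v)"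
    and lip: "\<And>u v. norm (B u - B v) \<le> \<kappa> * norm (u - v)"
    and "0 \<le> \<kappa>" "0 < \<gamma>"
    and p: "(1/\<gamma>) *\<^sub>R ((x - \<gamma> *\<^sub>R B x) - p) \<in> subdiff f p"
    and w: "- B w \<in> subdiff f w"
  shows "(norm (p + \<gamma> *\<^sub>R (B x - B p) - w))\<^sup>2 \<le> (norm (x - w))\<^sup>2 - (1 - (\<gamma> * \<kappa>)\<^sup>2) * (norm (x - p))\<^sup>2"
proof -
  define a d e where "a = p - w" and "d = x - p" and "e = \<gamma> *\<^sub>R (B x - B p)"
  have "0 \<le> inner (p - w) ((1/\<gamma>) *\<^sub>R ((x - \<gamma> *\<^sub>R B x) - p) - - B w) + inner (p - w) (B p - B w)"
    using subdiff_monotone[OF f p w] mono[of p w] by simp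
  also have "\<dots> = inner a (d - e) / \<gamma>"
    unfolding a_def d_def e_def using \<open>0 < \<gamma>\<close>
    by (simp add: inner_diff_right inner_add_right algebra_simps divide_simps)
  finally have "inner a (e - d) \<le> 0"
    using \<open>0 < \<gamma>\<close> by (simp add: zero_le_divide_iff inner_diff_right)
  moreover have "norm e \<le> \<gamma> * \<kappa> * norm d"
    unfolding e_def d_def using lip[of x p] \<open>0 < \<gamma>\<close> by (simp add: mult.assoc mult_left_mono)
  then have "(norm e)\<^sup>2 \<le> (\<gamma> * \<kappa>)\<^sup>2 * (norm d)\<^sup>2"
    by (metis norm_ge_zero power_mono power_mult_distrib)
  moreover have "(norm (a + e))\<^sup>2 = (norm (d + a))\<^sup>2 - (norm d)\<^sup>2 + (norm e)\<^sup>2 + 2 * inner a (e - d)"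
    unfolding power2_norm_eq_inner
    by (simp add: inner_add_left inner_add_right inner_diff_right inner_commute algebra_simps)
  moreover have "p + \<gamma> *\<^sub>R (B x - B p) - w = a + e" "x - w = d + a"
    unfolding a_def d_def e_def by simp_all
  ultimately show ?thesis
    unfolding d_def by (simp add: algebra_simps)
qed

lemma weak_strong_limit_inner_le:
  fixes x s :: "nat \<Rightarrow> 'h::real_inner"
  assumes ineq: "\<And>k. 0 \<le> inner (x k - a) (s k - c)"
    and bnd: "\<And>k. norm (x k) \<le> K"
    and s: "(\<lambda>k. norm (s k)) \<longlonglongrightarrow> 0"
    and x: "weak_conv x w"
  shows "inner (w - a) c \<le> 0"
proof -
  have "(\<lambda>k. inner (x k - a) (s k)) \<longlonglongrightarrow> 0"
  proof (rule Lim_null_comparison)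
    have "norm (inner (x k - a) (s k)) \<le> (K + norm a) * norm (s k)" for k
    proof -
      have "norm (inner (x k - a) (s k)) \<le> norm (x k - a) * norm (s k)"
        using Cauchy_Schwarz_ineq2 by simp
      also have "\<dots> \<le> (K + norm a) * norm (s k)"
        using bnd[of k] norm_triangle_ineq4[of "x k" a] by (intro mult_right_mono) auto
      finally show ?thesis .
    qed
    then show "\<forall>\<^sub>F k in sequentially. norm (inner (x k - a) (s k)) \<le> (K + norm a) * norm (s k)"
      by simp
    show "(\<lambda>k. (K + norm a) * norm (s k)) \<longlonglongrightarrow> 0"
      using tendsto_mult_right_zero[OF s] by simp
  qed
  moreover have "(\<lambda>k. inner (x k) c - inner a c) \<longlonglongrightarrow> inner w c - inner a c"
    using x unfolding weak_conv_def by (intro tendsto_diff) auto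
  ultimately have "(\<lambda>k. inner (x k - a) (s k) - (inner (x k) c - inner a c))
      \<longlonglongrightarrow> 0 - (inner w c - inner a c)"
    by (rule tendsto_diff)
  moreover have "inner (x k - a) (s k) - (inner (x k) c - inner a c) = inner (x k - a) (s k - c)" for k
    by (simp add: inner_diff_left inner_diff_right)
  ultimately have "0 \<le> 0 - (inner w c - inner a c)"
    using ineq by (intro LIMSEQ_le_const) auto
  then show ?thesis
    by (simp add: inner_diff_left)
qed

text \<open>Minty's trick: the forward-backward point \<open>w' = prox\<^sub>t\<^sub>f (w - t B w)\<close> with
  \<open>t = 1 / (\<kappa> + 1)\<close> gives a point of the graph of \<open>\<partial>f + B\<close> against which the limit
  inequality can be tested; as \<open>t \<kappa> < 1\<close>, it forces \<open>w' = w\<close>.\<close>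

lemma subdiff_plus_lipschitz_zeros_weakly_closed:
  fixes f :: "'h::{real_inner,complete_space} \<Rightarrow> ereal"
  assumes f: "Gamma0 f" and u0: "u0 \<in> subdiff f z0"
    and mono: "\<And>u v. 0 \<le> inner (u - v) (B u - B v)"
    and lip: "\<And>u v. norm (B u - B v) \<le> \<kappa> * norm (u - v)" and "0 \<le> \<kappa>"
    and u: "\<And>k. u k \<in> subdiff f (x k)"
    and bnd: "\<And>k. norm (x k) \<le> K"
    and res: "(\<lambda>k. norm (u k + B (x k))) \<longlonglongrightarrow> 0"
    and x: "weak_conv x w"
  shows "- B w \<in> subdiff f w"
proof -
  have pf: "proper_fun f"
    using f unfolding Gamma0_def by simp
  define t where "t = 1 / (\<kappa> + 1)"
  have t: "0 < t"
    unfolding t_def using \<open>0 \<le> \<kappa>\<close> by simp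
  define w' where "w' = prox (\<lambda>z. ereal t * f z) (w - t *\<^sub>R B w)"
  define v where "v = (1/t) *\<^sub>R ((w - t *\<^sub>R B w) - w')"
  have v: "v \<in> subdiff f w'"
    unfolding v_def w'_def by (rule prox_in_subdiff[OF f u0 t])
  have "0 \<le> inner (x k - w') ((u k + B (x k)) - (v + B w'))" for k
    using subdiff_monotone[OF pf u[of k] v] mono[of "x k" w']
    by (simp add: inner_diff_right inner_add_right)
  then have le: "inner (w - w') (v + B w') \<le> 0"
    using weak_strong_limit_inner_le[OF _ bnd res x] by blast
  have "inner (w - w') (B w - B w') \<le> \<kappa> * (norm (w - w'))\<^sup>2"
  proof -
    have "inner (w - w') (B w - B w') \<le> norm (w - w') * norm (B w - B w')"
      using Cauchy_Schwarz_ineq2 abs_le_iff by blast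
    also have "\<dots> \<le> norm (w - w') * (\<kappa> * norm (w - w'))"
      using lip by (intro mult_left_mono) auto
    finally show ?thesis
      by (simp add: power2_eq_square algebra_simps)
  qed
  moreover have "inner (w - w') (v + B w')
      = \<kappa> * (norm (w - w'))\<^sup>2 + (norm (w - w'))\<^sup>2 - inner (w - w') (B w - B w')"
    unfolding v_def t_def using \<open>0 \<le> \<kappa>\<close>
    by (simp add: inner_diff_right inner_add_right power2_norm_eq_inner algebra_simps)
  ultimately have "(norm (w - w'))\<^sup>2 \<le> 0"
    using le by linarith
  then have "w' = w"
    by simp
  moreover have "v = - B w"
    unfolding v_def \<open>w' = w\<close> using t by simp
  ultimately show ?thesis
    using v by simp
qed

locale tseng_iteration =
  fixes f :: "'h::{real_inner,complete_space} \<Rightarrow> ereal"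
    and B :: "'h \<Rightarrow> 'h"
    and \<kappa> \<epsilon> :: real
    and \<gamma> :: "nat \<Rightarrow> real"
    and A C E Z P :: "nat \<Rightarrow> 'h"
  assumes f: "Gamma0 f"
    and B_mono: "\<And>u v. 0 \<le> inner (u - v) (B u - B v)"
    and B_lip: "\<And>u v. norm (B u - B v) \<le> \<kappa> * norm (u - v)"
    and \<kappa>_pos: "0 < \<kappa>"
    and solvable: "\<exists>z. - B z \<in> subdiff f z"
    and \<epsilon>: "0 < \<epsilon>" "\<epsilon> < 1 / (\<kappa> + 1)"
    and \<gamma>: "\<And>n. \<epsilon> \<le> \<gamma> n \<and> \<gamma> n \<le> (1 - \<epsilon>) / \<kappa>"
    and summable_A: "summable (\<lambda>n. norm (A n))"
    and summable_C: "summable (\<lambda>n. norm (C n))"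
    and summable_E: "summable (\<lambda>n. norm (E n))"
    and P_eq: "\<And>n. P n = prox (\<lambda>z. ereal (\<gamma> n) * f z) (Z n - \<gamma> n *\<^sub>R (B (Z n) + A n)) + E n"
    and Z_Suc: "\<And>n. Z (Suc n) = P n + \<gamma> n *\<^sub>R (B (Z n) + A n) - \<gamma> n *\<^sub>R (B (P n) + C n)"
begin

definition zeros :: "'h set" where
  "zeros = {w. - B w \<in> subdiff f w}"

definition exact_prox :: "nat \<Rightarrow> 'h" where
  "exact_prox n = prox (\<lambda>z. ereal (\<gamma> n) * f z) (Z n - \<gamma> n *\<^sub>R B (Z n))"

definition exact_step :: "nat \<Rightarrow> 'h" where
  "exact_step n = exact_prox n + \<gamma> n *\<^sub>R (B (Z n) - B (exact_prox n))"

definition step_error :: "nat \<Rightarrow> real" where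
  "step_error n = 3 * ((1 - \<epsilon>) / \<kappa> * norm (A n)) + (1 - \<epsilon>) / \<kappa> * norm (C n) + 2 * norm (E n)"

lemma f_proper: "proper_fun f"
  using f unfolding Gamma0_def by simp

lemma \<epsilon>_less_1: "\<epsilon> < 1"
proof -
  have "1 / (\<kappa> + 1) < 1"
    using \<kappa>_pos by simp
  then show ?thesis
    using \<epsilon> by linarith
qed

lemma \<gamma>_pos: "0 < \<gamma> n"
  using \<gamma>[of n] \<epsilon> by linarith

lemma \<gamma>_le: "\<gamma> n \<le> (1 - \<epsilon>) / \<kappa>"
  using \<gamma> by blast

lemma \<gamma>_\<kappa>_le: "\<gamma> n * \<kappa> \<le> 1 - \<epsilon>"
  using mult_right_mono[OF \<gamma>_le[of n], of \<kappa>] \<kappa>_pos by simp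

lemma zeros_nonempty: "zeros \<noteq> {}"
  using solvable unfolding zeros_def by blast

lemma prox_in_subdiff_step:
  "(1 / \<gamma> n) *\<^sub>R (y - prox (\<lambda>z. ereal (\<gamma> n) * f z) y) \<in> subdiff f (prox (\<lambda>z. ereal (\<gamma> n) * f z) y)"
  using zeros_nonempty prox_in_subdiff[OF f _ \<gamma>_pos] unfolding zeros_def by blast

lemma exact_step_fejer:
  assumes "w \<in> zeros"
  shows "(norm (exact_step n - w))\<^sup>2 \<le> (norm (Z n - w))\<^sup>2 - (1 - (1 - \<epsilon>)\<^sup>2) * (norm (Z n - exact_prox n))\<^sup>2"
proof -
  have "(norm (exact_step n - w))\<^sup>2
      \<le> (norm (Z n - w))\<^sup>2 - (1 - (\<gamma> n * \<kappa>)\<^sup>2) * (norm (Z n - exact_prox n))\<^sup>2"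
    unfolding exact_step_def exact_prox_def
    using assms \<kappa>_pos by (intro tseng_step_fejer[OF f_proper B_mono B_lip _ \<gamma>_pos prox_in_subdiff_step])
      (auto simp: zeros_def)
  moreover have "(\<gamma> n * \<kappa>)\<^sup>2 \<le> (1 - \<epsilon>)\<^sup>2"
    using \<gamma>_\<kappa>_le[of n] \<gamma>_pos[of n] \<kappa>_pos by (intro power_mono) auto
  then have "(1 - (1 - \<epsilon>)\<^sup>2) * (norm (Z n - exact_prox n))\<^sup>2
      \<le> (1 - (\<gamma> n * \<kappa>)\<^sup>2) * (norm (Z n - exact_prox n))\<^sup>2"
    by (intro mult_right_mono) auto
  ultimately show ?thesis
    by linarith
qed

lemma exact_step_nonexpansive:
  assumes "w \<in> zeros"
  shows "norm (exact_step n - w) \<le> norm (Z n - w)"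
proof -
  have "(1 - \<epsilon>)\<^sup>2 \<le> 1"
    using \<epsilon> \<epsilon>_less_1 by (simp add: power_le_one)
  then have "0 \<le> (1 - (1 - \<epsilon>)\<^sup>2) * (norm (Z n - exact_prox n))\<^sup>2"
    using \<open>(1 - \<epsilon>)\<^sup>2 \<le> 1\<close> by simp
  then have "(norm (exact_step n - w))\<^sup>2 \<le> (norm (Z n - w))\<^sup>2"
    using exact_step_fejer[OF assms, of n] by linarith
  then show ?thesis
    using power2_le_imp_le norm_ge_zero by blast
qed

lemma P_exact_prox_dist: "norm (P n - exact_prox n) \<le> (1 - \<epsilon>) / \<kappa> * norm (A n) + norm (E n)"
proof -
  have "norm (P n - exact_prox n)
      \<le> norm (prox (\<lambda>z. ereal (\<gamma> n) * f z) (Z n - \<gamma> n *\<^sub>R (B (Z n) + A n)) - exact_prox n) + norm (E n)"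
    unfolding P_eq by (metis diff_add_eq norm_triangle_ineq)
  also have "norm (prox (\<lambda>z. ereal (\<gamma> n) * f z) (Z n - \<gamma> n *\<^sub>R (B (Z n) + A n)) - exact_prox n)
      \<le> norm ((Z n - \<gamma> n *\<^sub>R (B (Z n) + A n)) - (Z n - \<gamma> n *\<^sub>R B (Z n)))"
    unfolding exact_prox_def
    using zeros_nonempty prox_nonexpansive[OF f _ \<gamma>_pos] unfolding zeros_def by blast
  also have "\<dots> = \<gamma> n * norm (A n)"
    using \<gamma>_pos[of n] by (simp add: algebra_simps)
  also have "\<dots> \<le> (1 - \<epsilon>) / \<kappa> * norm (A n)"
    using \<gamma>_le[of n] by (intro mult_right_mono) auto
  finally show ?thesis
    by simp
qed

lemma Z_Suc_exact_step_dist: "norm (Z (Suc n) - exact_step n) \<le> step_error n"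
proof -
  let ?d = "P n - exact_prox n"
  have eq: "Z (Suc n) - exact_step n
      = ?d + \<gamma> n *\<^sub>R A n - \<gamma> n *\<^sub>R (B (P n) - B (exact_prox n)) - \<gamma> n *\<^sub>R C n"
    unfolding Z_Suc exact_step_def by (simp add: algebra_simps)
  have "norm (Z (Suc n) - exact_step n)
      \<le> norm ?d + norm (\<gamma> n *\<^sub>R A n) + norm (\<gamma> n *\<^sub>R (B (P n) - B (exact_prox n))) + norm (\<gamma> n *\<^sub>R C n)"
    using norm_triangle_ineq4[of "?d + \<gamma> n *\<^sub>R A n - \<gamma> n *\<^sub>R (B (P n) - B (exact_prox n))" "\<gamma> n *\<^sub>R C n"]
      norm_triangle_ineq4[of "?d + \<gamma> n *\<^sub>R A n" "\<gamma> n *\<^sub>R (B (P n) - B (exact_prox n))"]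
      norm_triangle_ineq[of ?d "\<gamma> n *\<^sub>R A n"]
    unfolding eq by linarith
  then have "norm (Z (Suc n) - exact_step n)
      \<le> norm ?d + \<gamma> n * norm (A n) + \<gamma> n * norm (B (P n) - B (exact_prox n)) + \<gamma> n * norm (C n)"
    using \<gamma>_pos[of n] by simp
  moreover have "\<gamma> n * norm (B (P n) - B (exact_prox n)) \<le> norm ?d"
  proof -
    have "\<gamma> n * norm (B (P n) - B (exact_prox n)) \<le> (\<gamma> n * \<kappa>) * norm ?d"
      using B_lip[of "P n" "exact_prox n"] \<gamma>_pos[of n] by (simp add: mult.assoc mult_left_mono)
    also have "\<dots> \<le> norm ?d"
      using \<gamma>_\<kappa>_le[of n] \<epsilon> by (intro mult_left_le_one_le) (use \<gamma>_pos[of n] \<kappa>_pos in auto)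
    finally show ?thesis .
  qed
  moreover have "\<gamma> n * norm (A n) \<le> (1 - \<epsilon>) / \<kappa> * norm (A n)" "\<gamma> n * norm (C n) \<le> (1 - \<epsilon>) / \<kappa> * norm (C n)"
    by (rule mult_right_mono[OF \<gamma>_le norm_ge_zero])+
  ultimately show ?thesis
    using P_exact_prox_dist[of n] unfolding step_error_def by linarith
qed

lemma step_error_nonneg: "0 \<le> step_error n"
  unfolding step_error_def using \<epsilon>_less_1 \<kappa>_pos by simp

lemma summable_step_error: "summable step_error"
  unfolding step_error_def
  by (intro summable_add summable_mult summable_A summable_C summable_E)

lemma dist_zero_convergent:
  assumes "w \<in> zeros"
  shows "convergent (\<lambda>n. norm (Z n - w))"
proof (rule quasi_fejer_convergent[OF _ _ step_error_nonneg summable_step_error])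
  show "norm (Z (Suc n) - w) \<le> norm (Z n - w) + step_error n" for n
    using norm_triangle_ineq[of "Z (Suc n) - exact_step n" "exact_step n - w"]
      Z_Suc_exact_step_dist[of n] exact_step_nonexpansive[OF assms, of n] by simp
qed simp

text \<open>Summing the Fejer inequality with errors telescopes the squared distances to a zero,
  so the residual \<open>\<parallel>Z n - exact_prox n\<parallel>\<close> tends to zero.\<close>

lemma residual_sq_le:
  assumes "z \<in> zeros" and K: "\<And>n. norm (Z n - z) \<le> K"
  shows "(1 - (1 - \<epsilon>)\<^sup>2) * (norm (Z n - exact_prox n))\<^sup>2
    \<le> (norm (Z n - z))\<^sup>2 - (norm (Z (Suc n) - z))\<^sup>2 + 2 * K * step_error n + (step_error n)\<^sup>2"
proof -
  define u where "u = norm (exact_step n - z)"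
  have "u \<le> K"
    using exact_step_nonexpansive[OF assms(1), of n] K[of n] unfolding u_def by linarith
  have "norm (Z (Suc n) - z) \<le> u + step_error n"
    using norm_triangle_ineq[of "Z (Suc n) - exact_step n" "exact_step n - z"]
      Z_Suc_exact_step_dist[of n] unfolding u_def by simp
  then have "(norm (Z (Suc n) - z))\<^sup>2 \<le> (u + step_error n)\<^sup>2"
    by (intro power_mono) auto
  also have "\<dots> \<le> u\<^sup>2 + 2 * K * step_error n + (step_error n)\<^sup>2"
    using \<open>u \<le> K\<close> step_error_nonneg[of n] by (simp add: power2_sum mult_right_mono)
  finally show ?thesis
    using exact_step_fejer[OF assms(1), of n] unfolding u_def by linarith
qed

lemma residual_tendsto_zero: "(\<lambda>n. norm (Z n - exact_prox n)) \<longlonglongrightarrow> 0"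
proof -
  obtain z where z: "z \<in> zeros"
    using zeros_nonempty by blast
  obtain \<alpha> where \<alpha>: "(\<lambda>n. norm (Z n - z)) \<longlonglongrightarrow> \<alpha>"
    using dist_zero_convergent[OF z] unfolding convergent_def by blast
  then obtain K where K: "\<And>n. norm (Z n - z) \<le> K"
    using convergent_imp_Bseq[OF dist_zero_convergent[OF z]] unfolding Bseq_def by auto
  define \<delta> where "\<delta> = 1 - (1 - \<epsilon>)\<^sup>2"
  have "0 < \<delta>"
    unfolding \<delta>_def using \<epsilon> \<epsilon>_less_1 by (simp add: power_less_one_iff abs_less_iff)
  have e: "step_error \<longlonglongrightarrow> 0"
    by (rule summable_LIMSEQ_zero[OF summable_step_error])
  have "(\<lambda>n. (norm (Z n - z))\<^sup>2 - (norm (Z (Suc n) - z))\<^sup>2 + 2 * K * step_error n + (step_error n)\<^sup>2)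
      \<longlonglongrightarrow> \<alpha>\<^sup>2 - \<alpha>\<^sup>2 + 2 * K * 0 + 0\<^sup>2"
    by (intro tendsto_intros \<alpha> e LIMSEQ_Suc[OF \<alpha>])
  then have lim: "(\<lambda>n. (norm (Z n - z))\<^sup>2 - (norm (Z (Suc n) - z))\<^sup>2 + 2 * K * step_error n + (step_error n)\<^sup>2)
      \<longlonglongrightarrow> 0"
    by simp
  have "(\<lambda>n. \<delta> * (norm (Z n - exact_prox n))\<^sup>2) \<longlonglongrightarrow> 0"
  proof (rule real_tendsto_sandwich[OF _ _ tendsto_const lim])
    show "\<forall>\<^sub>F n in sequentially. 0 \<le> \<delta> * (norm (Z n - exact_prox n))\<^sup>2"
      using \<open>0 < \<delta>\<close> by simp
    show "\<forall>\<^sub>F n in sequentially. \<delta> * (norm (Z n - exact_prox n))\<^sup>2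
        \<le> (norm (Z n - z))\<^sup>2 - (norm (Z (Suc n) - z))\<^sup>2 + 2 * K * step_error n + (step_error n)\<^sup>2"
      using residual_sq_le[OF z K] unfolding \<delta>_def by simp
  qed
  then have "(\<lambda>n. (1 / \<delta>) * (\<delta> * (norm (Z n - exact_prox n))\<^sup>2)) \<longlonglongrightarrow> 0"
    using tendsto_mult_right_zero by blast
  then have "(\<lambda>n. sqrt ((norm (Z n - exact_prox n))\<^sup>2)) \<longlonglongrightarrow> sqrt 0"
    using \<open>0 < \<delta>\<close> by (intro tendsto_intros) simp
  then show ?thesis
    by simp
qed

lemma Z_minus_P_tendsto_zero: "(\<lambda>n. norm (Z n - P n)) \<longlonglongrightarrow> 0"
proof (rule real_tendsto_sandwich[OF _ _ tendsto_const])
  have "(\<lambda>n. (1 - \<epsilon>) / \<kappa> * norm (A n) + norm (E n)) \<longlonglongrightarrow> (1 - \<epsilon>) / \<kappa> * 0 + 0"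
    by (intro tendsto_intros summable_LIMSEQ_zero summable_A summable_E)
  then show "(\<lambda>n. norm (Z n - exact_prox n) + ((1 - \<epsilon>) / \<kappa> * norm (A n) + norm (E n))) \<longlonglongrightarrow> 0"
    using tendsto_add[OF residual_tendsto_zero] by simp
  have "norm (Z n - P n) \<le> norm (Z n - exact_prox n) + ((1 - \<epsilon>) / \<kappa> * norm (A n) + norm (E n))" for n
    using norm_diff_triangle_le[OF order_refl P_exact_prox_dist[of n, unfolded norm_minus_commute[of "P n"]]]
    by simp
  then show "\<forall>\<^sub>F n in sequentially. norm (Z n - P n)
      \<le> norm (Z n - exact_prox n) + ((1 - \<epsilon>) / \<kappa> * norm (A n) + norm (E n))"
    by simp
qed simp

lemma Z_bounded: obtains K where "\<And>n. norm (Z n) \<le> K"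
proof -
  obtain z where "z \<in> zeros"
    using zeros_nonempty by blast
  then obtain K where "\<And>n. norm (Z n - z) \<le> K"
    using convergent_imp_Bseq[OF dist_zero_convergent] unfolding Bseq_def by auto
  then have "norm (Z n) \<le> K + norm z" for n
    using norm_triangle_ineq[of "Z n - z" z] by (simp add: add_right_mono order_trans)
  then show ?thesis
    using that by blast
qed

lemma weak_cluster_point_in_zeros:
  assumes r: "strict_mono r" and w: "weak_conv (Z \<circ> r) w"
  shows "w \<in> zeros"
proof -
  obtain K where K: "\<And>n. norm (Z n) \<le> K"
    using Z_bounded by blast
  obtain Kr where Kr: "\<And>n. norm (Z n - exact_prox n) \<le> Kr"
    using convergent_imp_Bseq[OF convergentI[OF residual_tendsto_zero]] unfolding Bseq_def by auto
  define u where "u n = (1 / \<gamma> n) *\<^sub>R ((Z n - \<gamma> n *\<^sub>R B (Z n)) - exact_prox n)" for n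
  have bound: "norm (u n + B (exact_prox n)) \<le> (1 / \<epsilon> + \<kappa>) * norm (Z n - exact_prox n)" for n
  proof -
    have eq: "u n + B (exact_prox n) = (1 / \<gamma> n) *\<^sub>R (Z n - exact_prox n) - (B (Z n) - B (exact_prox n))"
      unfolding u_def using \<gamma>_pos[of n] by (simp add: algebra_simps)
    have "1 / \<gamma> n \<le> 1 / \<epsilon>"
      using \<gamma>[of n] \<epsilon> by (intro divide_left_mono) auto
    then have "norm ((1 / \<gamma> n) *\<^sub>R (Z n - exact_prox n)) \<le> 1 / \<epsilon> * norm (Z n - exact_prox n)"
      using \<gamma>_pos[of n] mult_right_mono[of "1 / \<gamma> n" "1 / \<epsilon>" "norm (Z n - exact_prox n)"] by simp
    then show ?thesis
      using norm_triangle_ineq4[of "(1 / \<gamma> n) *\<^sub>R (Z n - exact_prox n)" "B (Z n) - B (exact_prox n)"]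
        B_lip[of "Z n" "exact_prox n"] unfolding eq distrib_right by linarith
  qed
  have residual_r: "(\<lambda>k. norm (Z (r k) - exact_prox (r k))) \<longlonglongrightarrow> 0"
    using LIMSEQ_subseq_LIMSEQ[OF residual_tendsto_zero r] unfolding comp_def .
  have res: "(\<lambda>k. norm (u (r k) + B (exact_prox (r k)))) \<longlonglongrightarrow> 0"
  proof (rule real_tendsto_sandwich[OF _ _ tendsto_const])
    show "(\<lambda>k. (1 / \<epsilon> + \<kappa>) * norm (Z (r k) - exact_prox (r k))) \<longlonglongrightarrow> 0"
      using tendsto_mult_right_zero[OF residual_r] .
  qed (use bound in auto)
  have "weak_conv (exact_prox \<circ> r) w"
    by (rule weak_conv_if_norm_diff_tendsto_zero[OF w]) (use residual_r in \<open>simp add: comp_def\<close>)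
  moreover have "norm (exact_prox n) \<le> K + Kr" for n
    using norm_triangle_ineq4[of "Z n" "Z n - exact_prox n"] K[of n] Kr[of n] by simp
  moreover obtain z0 where "- B z0 \<in> subdiff f z0"
    using solvable by blast
  moreover have "u (r k) \<in> subdiff f (exact_prox (r k))" for k
    unfolding u_def exact_prox_def by (rule prox_in_subdiff_step)
  ultimately show ?thesis
    using subdiff_plus_lipschitz_zeros_weakly_closed[OF f _ B_mono B_lip _ _ _ res, of _ z0 "K + Kr" w]
      \<kappa>_pos unfolding zeros_def by (simp add: comp_def)
qed

theorem weak_convergence: "\<exists>w\<in>zeros. weak_conv Z w \<and> weak_conv P w"
proof -
  obtain K where "\<And>n. norm (Z n) \<le> K"
    using Z_bounded by blast
  then obtain w where "w \<in> zeros" "weak_conv Z w"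
    using opial[of Z K zeros] dist_zero_convergent weak_cluster_point_in_zeros by blast
  then show ?thesis
    using weak_conv_if_norm_diff_tendsto_zero[OF _ Z_minus_P_tendsto_zero] by blast
qed

end

lemma summable_norm_Pair:
  assumes "summable (\<lambda>n. norm (u n))" "summable (\<lambda>n. norm (v n))"
  shows "summable (\<lambda>n. norm (u n, v n))"
  by (rule summable_comparison_test[OF _ summable_add[OF assms]]) (auto intro: norm_Pair_le)

theorem proposition4p2:
  fixes f :: "('a::{real_inner,complete_space} \<times> 'b::{real_inner,complete_space}) \<Rightarrow> ereal"
    and L :: "'a \<times> 'b \<Rightarrow> real"
    and G :: "'a \<times> 'b \<Rightarrow> 'a \<times> 'b"
    and \<kappa> \<epsilon> :: real
    and \<gamma> :: "nat \<Rightarrow> real"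
    and a1 b1 c1 x1 y1 p1 q1 :: "nat \<Rightarrow> 'a"
    and a2 b2 c2 x2 y2 p2 q2 :: "nat \<Rightarrow> 'b"
  assumes chi_pos: "0 < \<kappa>"
    and f_Gamma0: "Gamma0 f"
    and L_grad: "\<And>z. GDERIV L z :> G z"
    and G_lip: "lipschitz_on \<kappa> UNIV G"
    and L_concave: "\<And>u1. concave_on UNIV (\<lambda>u2. L (u1, u2))"
    and L_convex: "\<And>u2. convex_on UNIV (\<lambda>u1. L (u1, u2))"
    and sol: "\<exists>z1 z2. (- fst (G (z1, z2)), snd (G (z1, z2))) \<in> subdiff f (z1, z2)"
    and eps: "0 < \<epsilon>" "\<epsilon> < 1 / (\<kappa> + 1)"
    and gamma: "\<And>n. \<epsilon> \<le> \<gamma> n \<and> \<gamma> n \<le> (1 - \<epsilon>) / \<kappa>"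
    and sa1: "summable (\<lambda>n. norm (a1 n))" and sb1: "summable (\<lambda>n. norm (b1 n))"
    and sc1: "summable (\<lambda>n. norm (c1 n))"
    and sa2: "summable (\<lambda>n. norm (a2 n))" and sb2: "summable (\<lambda>n. norm (b2 n))"
    and sc2: "summable (\<lambda>n. norm (c2 n))"
    and y1_def: "\<And>n. y1 n = x1 n - \<gamma> n *\<^sub>R (fst (G (x1 n, x2 n)) + a1 n)"
    and y2_def: "\<And>n. y2 n = x2 n + \<gamma> n *\<^sub>R (snd (G (x1 n, x2 n)) + a2 n)"
    and p_def: "\<And>n. (p1 n, p2 n) = prox (\<lambda>z. ereal (\<gamma> n) * f z) (y1 n, y2 n) + (b1 n, b2 n)"
    and q1_def: "\<And>n. q1 n = p1 n - \<gamma> n *\<^sub>R (fst (G (p1 n, p2 n)) + c1 n)"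
    and q2_def: "\<And>n. q2 n = p2 n + \<gamma> n *\<^sub>R (snd (G (p1 n, p2 n)) + c2 n)"
    and x1_step: "\<And>n. x1 (Suc n) = x1 n - y1 n + q1 n"
    and x2_step: "\<And>n. x2 (Suc n) = x2 n - y2 n + q2 n"
  shows "\<exists>xb1 xb2.
           xb1 \<in> Argmin (\<lambda>x. f (x, xb2) + ereal (L (x, xb2))) \<and>
           xb2 \<in> Argmin (\<lambda>x. f (xb1, x) - ereal (L (xb1, x))) \<and>
           weak_conv x1 xb1 \<and> weak_conv p1 xb1 \<and>
           weak_conv x2 xb2 \<and> weak_conv p2 xb2"
proof -
  interpret convex_concave L G
    using L_grad L_concave L_convex by unfold_locales
  define Z P A C E where "Z n = (x1 n, x2 n)" and "P n = (p1 n, p2 n)"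
    and "A n = (a1 n, - a2 n)" and "C n = (c1 n, - c2 n)" and "E n = (b1 n, b2 n)" for n
  interpret tseng_iteration f saddle_operator \<kappa> \<epsilon> \<gamma> A C E Z P
  proof unfold_locales
    show "\<exists>z. - saddle_operator z \<in> subdiff f z"
      using sol unfolding saddle_operator_def by auto
    show "summable (\<lambda>n. norm (A n))" "summable (\<lambda>n. norm (C n))" "summable (\<lambda>n. norm (E n))"
      unfolding A_def C_def E_def using sa1 sa2 sc1 sc2 sb1 sb2 by (simp_all add: summable_norm_Pair)
    show "P n = prox (\<lambda>z. ereal (\<gamma> n) * f z) (Z n - \<gamma> n *\<^sub>R (saddle_operator (Z n) + A n)) + E n" for n
      using p_def[of n] unfolding P_def Z_def A_def E_def saddle_operator_def y1_def y2_def
      by (simp add: algebra_simps)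
    show "Z (Suc n) = P n + \<gamma> n *\<^sub>R (saddle_operator (Z n) + A n) - \<gamma> n *\<^sub>R (saddle_operator (P n) + C n)" for n
      unfolding Z_def P_def A_def C_def saddle_operator_def x1_step x2_step y1_def y2_def q1_def q2_def
      by (simp add: algebra_simps)
  qed (use f_Gamma0 saddle_operator_monotone saddle_operator_lipschitz[OF G_lip] chi_pos eps gamma in auto)
  obtain xb1 xb2 where "(xb1, xb2) \<in> zeros" "weak_conv Z (xb1, xb2)" "weak_conv P (xb1, xb2)"
    using weak_convergence by auto
  then show ?thesis
    using saddle_point_if_subdiff[OF f_proper] weak_conv_PairD[of x1 x2] weak_conv_PairD[of p1 p2]
    unfolding zeros_def Z_def[abs_def] P_def[abs_def] by blast
qed

end
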